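(* Let $R$ be a ring, $a,b\in C(R)$ (the center of $R$) and $n\in\mathbb{N}$. Then $R$ is weakly $(ax^{2n}-bx)$-$r$-clean if and only if $R$ is weakly $(ax^{2n}+bx)$-$r$-clean.
   Context: Rings are associative with identity; $C(R)$ is the center of $R$ and $Reg(R)=\{r\in R: r=ryr \text{ for some } y\in R\}$. For a fixed polynomial $g(x)\in C(R)[x]$, an element $z\in R$ is weakly $g(x)$-$r$-clean if $z=r+s$ or $z=r-s$ with $r\in Reg(R)$ and $g(s)=0$; $R$ is weakly $g(x)$-$r$-clean if all its elements are. *)

theory Defs
  imports Main
begin

definition center :: "'a::ring_1 set" where
  "center = {c. \<forall>x. c * x = x * c}"

definition Reg :: "'a::ring_1 set" where
  "Reg = {r. \<exists>y. r = r * y * r}"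

text \<open>A polynomial over the center is represented by its evaluation map
  (coefficients central, so evaluation is unambiguous).\<close>

definition weakly_g_r_clean_elem :: "('a::ring_1 \<Rightarrow> 'a) \<Rightarrow> 'a \<Rightarrow> bool" where
  "weakly_g_r_clean_elem g z \<longleftrightarrow>
     (\<exists>r s. r \<in> Reg \<and> g s = 0 \<and> (z = r + s \<or> z = r - s))"

definition weakly_g_r_clean :: "('a::ring_1 \<Rightarrow> 'a) \<Rightarrow> bool" where
  "weakly_g_r_clean g \<longleftrightarrow> (\<forall>z. weakly_g_r_clean_elem g z)"

end

theory Submission
  imports Defs
begin

text \<open>Since $(-s)^{2n} = s^{2n}$, the substitution $s \mapsto -s$ turns roots of
  $a x^{2n} - b x$ into roots of $a x^{2n} + b x$ and back, and a weakly clean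
  decomposition $z = r \pm s$ is the same as $z = r \mp (-s)$.\<close>

lemma weakly_g_r_clean_elem_neg_comp:
  fixes g :: "'a::ring_1 \<Rightarrow> 'a"
  assumes "weakly_g_r_clean_elem g z"
  shows "weakly_g_r_clean_elem (\<lambda>x. g (- x)) z"
proof -
  obtain r s where "r \<in> Reg" "g s = 0" "z = r + s \<or> z = r - s"
    using assms unfolding weakly_g_r_clean_elem_def by blast
  then have "r \<in> Reg \<and> g (- (- s)) = 0 \<and> (z = r + - s \<or> z = r - - s)"
    by auto
  then show ?thesis
    unfolding weakly_g_r_clean_elem_def by blast
qed

lemma weakly_g_r_clean_neg_comp_iff:
  fixes g :: "'a::ring_1 \<Rightarrow> 'a"
  shows "weakly_g_r_clean (\<lambda>x. g (- x)) \<longleftrightarrow> weakly_g_r_clean g"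
  using weakly_g_r_clean_elem_neg_comp[of g] weakly_g_r_clean_elem_neg_comp[of "\<lambda>x. g (- x)"]
  unfolding weakly_g_r_clean_def by auto

theorem theorem3p4:
  fixes a b :: "'a::ring_1" and n :: nat
  assumes "a \<in> center" and "b \<in> center" and "n \<ge> 1"
  shows "weakly_g_r_clean (\<lambda>x::'a. a * x ^ (2 * n) - b * x) \<longleftrightarrow>
         weakly_g_r_clean (\<lambda>x::'a. a * x ^ (2 * n) + b * x)"
proof -
  have "(\<lambda>x::'a. a * (- x) ^ (2 * n) + b * (- x)) = (\<lambda>x. a * x ^ (2 * n) - b * x)"
    by (simp add: power_mult)
  then show ?thesis
    using weakly_g_r_clean_neg_comp_iff[of "\<lambda>x. a * x ^ (2 * n) + b * x"] by simp
qed

end
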